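(* For every integer $n\ge 1$, the restriction to $\mathfrak{sp}(2n)$ of the functional $$F_n=\sum_{i=1}^{n}\sum_{j=1}^{n+1-i}e_{i,j}^*$$ is regular on $C_n=\mathfrak{sp}(2n)$, i.e. the kernel of its Kirillov form on $\mathfrak{sp}(2n)$ has dimension $n$.
   Context: Over $\mathbb{C}$. $e_{i,j}^*(X)=X_{i,j}$. For an $n\times n$ matrix $M$, let $M^{\hat t}$ denote its transpose across the antidiagonal, $(M^{\hat t})_{i,j}=M_{n+1-j,n+1-i}$. Here $\mathfrak{sp}(2n)$ denotes the Lie algebra of $2n\times 2n$ matrices of the block form $\begin{pmatrix}A&B\\ C&-A^{\hat t}\end{pmatrix}$ with $A,B,C$ arbitrary $n\times n$ matrices subject to $B^{\hat t}=B$, $C^{\hat t}=C$ (equivalently, spanned by $e_{i,j}-e_{2n+1-j,2n+1-i}$ for $1\le i,j\le n$, and $e_{i,j}+e_{2n+1-j,2n+1-i}$ for $i\le n<j$ or $j\le n<i$). For $f\in\mathfrak{g}^*$, $B_f(x,y)=f([x,y])$, $\ker(B_f)=\{x\in\mathfrak{g}: f([x,y])=0\ \forall y\in\mathfrak{g}\}$, and $f$ is regular if $\dim\ker(B_f)=\operatorname{ind}\mathfrak{g}:=\min_{g\in\mathfrak{g}^*}\dim\ker(B_g)$. It is known that $\operatorname{ind}\mathfrak{sp}(2n)=n$. *)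

theory Defs
  imports Complex_Main "HOL-Library.Function_Algebras"
begin

text \<open>Square matrices of size 2n are modelled as functions nat => nat => complex,
  1-based indices in {1..2n}, and zero outside that range.\<close>

definition mscale :: "complex \<Rightarrow> (nat \<Rightarrow> nat \<Rightarrow> complex) \<Rightarrow> (nat \<Rightarrow> nat \<Rightarrow> complex)" where
  "mscale c M = (\<lambda>i j. c * M i j)"

definition mmult :: "nat \<Rightarrow> (nat \<Rightarrow> nat \<Rightarrow> complex) \<Rightarrow> (nat \<Rightarrow> nat \<Rightarrow> complex) \<Rightarrow> (nat \<Rightarrow> nat \<Rightarrow> complex)" where
  "mmult m X Y = (\<lambda>i j. \<Sum>k=1..m. X i k * Y k j)"

definition lie_bracket :: "nat \<Rightarrow> (nat \<Rightarrow> nat \<Rightarrow> complex) \<Rightarrow> (nat \<Rightarrow> nat \<Rightarrow> complex) \<Rightarrow> (nat \<Rightarrow> nat \<Rightarrow> complex)" where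
  "lie_bracket m X Y = (\<lambda>i j. mmult m X Y i j - mmult m Y X i j)"

text \<open>sp(2n): block matrices (A B; C -A^t') with B^t' = B, C^t' = C, where ^t' is the
  antidiagonal transpose.\<close>

definition sp :: "nat \<Rightarrow> (nat \<Rightarrow> nat \<Rightarrow> complex) set" where
  "sp n = {M. (\<forall>i j. \<not> (i \<in> {1..2*n} \<and> j \<in> {1..2*n}) \<longrightarrow> M i j = 0) \<and>
     (\<forall>i\<in>{1..2*n}. \<forall>j\<in>{1..2*n}.
        M i j = (if (i \<le> n) = (j \<le> n) then -1 else 1) * M (2*n+1-j) (2*n+1-i))}"

definition F :: "nat \<Rightarrow> (nat \<Rightarrow> nat \<Rightarrow> complex) \<Rightarrow> complex" where
  "F n X = (\<Sum>i=1..n. \<Sum>j=1..n+1-i. X i j)"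

definition kirillov_kernel :: "nat \<Rightarrow> (nat \<Rightarrow> nat \<Rightarrow> complex) set" where
  "kirillov_kernel n = {x \<in> sp n. \<forall>y \<in> sp n. F n (lie_bracket (2*n) x y) = 0}"

end

theory Submission
  imports Defs
begin

text \<open>Write x \<in> sp(2n) as (A B; C -A^t'). Since F(X) is the pairing of the upper left block
  of X with the 0/1 matrix P having ones on and above the antidiagonal, testing x against the
  basis of sp(2n) shows: x lies in the kernel iff A commutes with P and the row (column)
  prefix sums of C (of B) form antisymmetric tables. An induction along pairs of antidiagonals
  forces B = C = 0, and the commutation with P determines A row by row from its first row, so
  the kernel has dimension at most n. Conversely, the tridiagonal matrix T of the path
  1 - 2 - ... - n with a loop at 1 commutes with P, and the polynomials U_m in T given by
  U_0 = U_1 = I, U_(m+2) = U_(m+1) T - U_m have first rows e_1, ..., e_n; the matrices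
  diag(U_m, -U_m^t') are n kernel elements with independent first rows.\<close>

lemma (in vector_space) dim_eq_card_of_coordinates:
  fixes b :: "'i \<Rightarrow> 'b" and c :: "'i \<Rightarrow> 'b \<Rightarrow> 'a"
  assumes V: "subspace V" and I: "finite I" and b: "b ` I \<subseteq> V"
    and c_add: "\<And>j x y. j \<in> I \<Longrightarrow> c j (x + y) = c j x + c j y"
    and c_scale: "\<And>j a x. j \<in> I \<Longrightarrow> c j (a *s x) = a * c j x"
    and dual: "\<And>i j. i \<in> I \<Longrightarrow> j \<in> I \<Longrightarrow> c j (b i) = (if i = j then 1 else 0)"
    and separating: "\<And>x. x \<in> V \<Longrightarrow> (\<And>j. j \<in> I \<Longrightarrow> c j x = 0) \<Longrightarrow> x = 0"
  shows "dim V = card I"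
proof -
  have c_0: "c j 0 = 0" if "j \<in> I" for j
    using c_scale[OF that, of 0 0] by simp
  have c_sum: "c j (\<Sum>i\<in>S. g i) = (\<Sum>i\<in>S. c j (g i))" if "j \<in> I" "finite S" for j g S
    using that(2) by (induction S rule: finite_induct) (simp_all add: c_0[OF that(1)] c_add[OF that(1)])
  have c_expand: "c j (\<Sum>i\<in>I. f i *s b i) = f j" if "j \<in> I" for f j
    using that I by (simp add: c_sum c_scale dual if_distrib[of "\<lambda>t. _ * t"] cong: if_cong)
  have inj: "inj_on b I"
  proof (rule inj_onI)
    fix i i' assume "i \<in> I" "i' \<in> I" "b i = b i'"
    then have "c i (b i') = 1" using dual[of i i] by simp
    then show "i = i'" using dual[of i' i] \<open>i \<in> I\<close> \<open>i' \<in> I\<close> by (auto split: if_splits)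
  qed
  have "independent (b ` I)"
  proof (rule independent_if_scalars_zero)
    fix f x assume sum: "(\<Sum>x\<in>b ` I. f x *s x) = 0" and x: "x \<in> b ` I"
    then obtain j where j: "j \<in> I" "x = b j" by blast
    have "(\<Sum>i\<in>I. f (b i) *s b i) = 0" using sum by (simp add: sum.reindex[OF inj])
    then show "f x = 0" using c_expand[OF j(1), of "f \<circ> b"] j c_0[OF j(1)] by simp
  qed (use I in simp)
  moreover have "V \<subseteq> span (b ` I)"
  proof
    fix x assume x: "x \<in> V"
    let ?y = "\<Sum>i\<in>I. c i x *s b i"
    have y: "?y \<in> V" using b by (intro subspace_sum[OF V] subspace_scale[OF V]) auto
    have "c j (x - ?y) = 0" if "j \<in> I" for j
      using c_add[OF that, of "x - ?y" ?y] c_expand[OF that] by simp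
    then have "x = ?y" using separating[OF subspace_diff[OF V x y]] by simp
    moreover have "?y \<in> span (b ` I)"
      by (intro span_sum span_scale span_base imageI)
    ultimately show "x \<in> span (b ` I)" by simp
  qed
  ultimately show ?thesis
    using dim_unique[OF b _ _ card_image[OF inj]] by blast
qed

lemma mscale_apply [simp]: "mscale c M i j = c * M i j"
  by (simp add: mscale_def)

interpretation mat: vector_space mscale
  by unfold_locales (auto simp: mscale_def fun_eq_iff algebra_simps)

lemma mmult_add_left: "mmult m (X + X') Y = mmult m X Y + mmult m X' Y"
  by (simp add: mmult_def fun_eq_iff distrib_right sum.distrib)

lemma mmult_add_right: "mmult m X (Y + Y') = mmult m X Y + mmult m X Y'"
  by (simp add: mmult_def fun_eq_iff distrib_left sum.distrib)

lemma mmult_diff_left: "mmult m (X - X') Y = mmult m X Y - mmult m X' Y"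
  by (simp add: mmult_def fun_eq_iff left_diff_distrib sum_subtractf)

lemma mmult_diff_right: "mmult m X (Y - Y') = mmult m X Y - mmult m X Y'"
  by (simp add: mmult_def fun_eq_iff right_diff_distrib sum_subtractf)

lemma mmult_mscale_left: "mmult m (mscale c X) Y = mscale c (mmult m X Y)"
  by (simp add: mmult_def fun_eq_iff sum_distrib_left mult.assoc)

lemma mmult_mscale_right: "mmult m X (mscale c Y) = mscale c (mmult m X Y)"
  by (simp add: mmult_def fun_eq_iff sum_distrib_left algebra_simps)

lemma mmult_assoc: "mmult m (mmult m X Y) Z = mmult m X (mmult m Y Z)"
proof -
  have "(\<Sum>k=1..m. (\<Sum>l=1..m. X i l * Y l k) * Z k j) = (\<Sum>l=1..m. X i l * (\<Sum>k=1..m. Y l k * Z k j))"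
    for i j
    by (simp add: sum_distrib_left sum_distrib_right mult.assoc) (rule sum.swap)
  then show ?thesis by (simp add: mmult_def fun_eq_iff)
qed

lemma lie_bracket_add_left: "lie_bracket m (X + X') Y = lie_bracket m X Y + lie_bracket m X' Y"
  by (simp add: lie_bracket_def fun_eq_iff mmult_add_left mmult_add_right)

lemma lie_bracket_add_right: "lie_bracket m X (Y + Y') = lie_bracket m X Y + lie_bracket m X Y'"
  by (simp add: lie_bracket_def fun_eq_iff mmult_add_left mmult_add_right)

lemma lie_bracket_mscale_left: "lie_bracket m (mscale c X) Y = mscale c (lie_bracket m X Y)"
  by (simp add: lie_bracket_def fun_eq_iff mmult_mscale_left mmult_mscale_right algebra_simps)

lemma lie_bracket_mscale_right: "lie_bracket m X (mscale c Y) = mscale c (lie_bracket m X Y)"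
  by (simp add: lie_bracket_def fun_eq_iff mmult_mscale_left mmult_mscale_right algebra_simps)

lemma F_add: "F n (X + Y) = F n X + F n Y"
  by (simp add: F_def sum.distrib)

lemma F_mscale: "F n (mscale c X) = c * F n X"
  by (simp add: F_def sum_distrib_left)

lemma subspace_sp: "mat.subspace (sp n)"
  unfolding mat.subspace_def sp_def by (auto simp: algebra_simps)

lemma subspace_kirillov_kernel: "mat.subspace (kirillov_kernel n)"
proof -
  have "0 \<in> kirillov_kernel n"
    using mat.subspace_0[OF subspace_sp] by (simp add: kirillov_kernel_def lie_bracket_def mmult_def F_def)
  then show ?thesis
    using mat.subspace_add[OF subspace_sp] mat.subspace_scale[OF subspace_sp]
    unfolding mat.subspace_def kirillov_kernel_def
    by (auto simp: lie_bracket_add_left lie_bracket_mscale_left F_add F_mscale)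
qed

definition idm :: "nat \<Rightarrow> nat \<Rightarrow> nat \<Rightarrow> complex" where
  "idm n i j = (if i = j \<and> i \<in> {1..n} then 1 else 0)"

definition antitriangle :: "nat \<Rightarrow> nat \<Rightarrow> nat \<Rightarrow> complex" where
  "antitriangle n i j = (if 1 \<le> i \<and> 1 \<le> j \<and> i + j \<le> n + 1 then 1 else 0)"

definition tridiag :: "nat \<Rightarrow> nat \<Rightarrow> nat \<Rightarrow> complex" where
  "tridiag n i j = (if i \<in> {1..n} \<and> j \<in> {1..n} \<and> (i + 1 = j \<or> j + 1 = i \<or> i = 1 \<and> j = 1) then 1 else 0)"

lemma mmult_idm_left:
  assumes "\<And>i j. i \<notin> {1..n} \<Longrightarrow> X i j = 0"
  shows "mmult n (idm n) X = X"
proof -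
  have "mmult n (idm n) X i j = (\<Sum>k\<in>{1..n}. if k = i then X i j else 0)" for i j
    unfolding mmult_def idm_def by (rule sum.cong) auto
  then have "mmult n (idm n) X i j = (if i \<in> {1..n} then X i j else 0)" for i j
    by simp
  then show ?thesis using assms by (auto simp: fun_eq_iff)
qed

lemma mmult_idm_right:
  assumes "\<And>i j. j \<notin> {1..n} \<Longrightarrow> X i j = 0"
  shows "mmult n X (idm n) = X"
proof -
  have "mmult n X (idm n) i j = (\<Sum>k\<in>{1..n}. if k = j then X i j else 0)" for i j
    unfolding mmult_def idm_def by (rule sum.cong) auto
  then have "mmult n X (idm n) i j = (if j \<in> {1..n} then X i j else 0)" for i j
    by simp
  then show ?thesis using assms by (auto simp: fun_eq_iff)
qed

lemma tridiag_sym: "tridiag n i j = tridiag n j i"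
  by (auto simp: tridiag_def)

lemma antitriangle_sym: "antitriangle n i j = antitriangle n j i"
  by (auto simp: antitriangle_def)

lemma tridiag_split:
  assumes "k \<in> {1..n}" "j \<in> {1..n}"
  shows "tridiag n k j = (if k = j - 1 then if 2 \<le> j then 1 else 0 else 0) + (if k = j + 1 then 1 else 0)
                         + (if k = 1 then if j = 1 then 1 else 0 else 0)"
  using assms by (auto simp: tridiag_def)

lemma mmult_antitriangle_tridiag:
  "mmult n (antitriangle n) (tridiag n) i j =
     (if i \<in> {1..n} \<and> j \<in> {1..n} then (if i + j \<le> n + 2 then 1 else 0) + (if i + j \<le> n then 1 else 0) else 0)"
proof (cases "i \<in> {1..n} \<and> j \<in> {1..n}")
  case True
  then have "mmult n (antitriangle n) (tridiag n) i j =
      (\<Sum>k\<in>{1..n}. (if k = j - 1 then if 2 \<le> j then antitriangle n i k else 0 else 0)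
        + (if k = j + 1 then antitriangle n i k else 0) + (if k = 1 then if j = 1 then antitriangle n i k else 0 else 0))"
    unfolding mmult_def by (intro sum.cong) (auto simp: tridiag_split)
  also have "\<dots> = (if i + j \<le> n + 2 then 1 else 0) + (if i + j \<le> n then 1 else 0)"
    using True by (simp add: sum.distrib) (auto simp: antitriangle_def)
  finally show ?thesis using True by simp
next
  case False
  then show ?thesis by (auto simp: mmult_def antitriangle_def tridiag_def intro!: sum.neutral)
qed

lemma antitriangle_tridiag_commute:
  "mmult n (antitriangle n) (tridiag n) = mmult n (tridiag n) (antitriangle n)"
proof -
  have "mmult n (tridiag n) (antitriangle n) i j = mmult n (antitriangle n) (tridiag n) j i" for i j
    unfolding mmult_def by (simp add: tridiag_sym[of n i] antitriangle_sym[of n _ j] mult.commute)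
  then show ?thesis by (auto simp: fun_eq_iff mmult_antitriangle_tridiag add.commute)
qed

fun cheb :: "nat \<Rightarrow> nat \<Rightarrow> nat \<Rightarrow> nat \<Rightarrow> complex" where
  "cheb n 0 = idm n"
| "cheb n (Suc 0) = idm n"
| "cheb n (Suc (Suc m)) = mmult n (cheb n (Suc m)) (tridiag n) - cheb n m"

lemma antitriangle_idm_commute: "mmult n (antitriangle n) (idm n) = mmult n (idm n) (antitriangle n)"
proof -
  have "mmult n (antitriangle n) (idm n) = antitriangle n"
    by (rule mmult_idm_right) (auto simp: antitriangle_def)
  moreover have "mmult n (idm n) (antitriangle n) = antitriangle n"
    by (rule mmult_idm_left) (auto simp: antitriangle_def)
  ultimately show ?thesis by simp
qed

lemma antitriangle_cheb_commute:
  "mmult n (antitriangle n) (cheb n m) = mmult n (cheb n m) (antitriangle n)"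
proof (induction n m rule: cheb.induct)
  case (3 n m)
  let ?P = "antitriangle n" and ?T = "tridiag n"
  have "mmult n ?P (mmult n (cheb n (Suc m)) ?T) = mmult n (mmult n ?P (cheb n (Suc m))) ?T"
    by (simp add: mmult_assoc)
  also have "\<dots> = mmult n (cheb n (Suc m)) (mmult n ?P ?T)"
    by (simp add: 3(1) mmult_assoc)
  also have "\<dots> = mmult n (mmult n (cheb n (Suc m)) ?T) ?P"
    by (simp add: antitriangle_tridiag_commute mmult_assoc)
  finally have "mmult n ?P (mmult n (cheb n (Suc m)) ?T) = mmult n (mmult n (cheb n (Suc m)) ?T) ?P" .
  then show ?case
    unfolding cheb.simps mmult_diff_left mmult_diff_right 3(2) by simp
qed (simp_all add: antitriangle_idm_commute)

lemma cheb_row1: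
  assumes "1 \<le> n" "m \<le> n"
  shows "cheb n m 1 j = (if j = max 1 m then 1 else 0)"
  using assms
proof (induction n m arbitrary: j rule: cheb.induct)
  case (3 n m)
  have "mmult n (cheb n (Suc m)) (tridiag n) 1 j = (\<Sum>k\<in>{1..n}. if k = Suc m then tridiag n k j else 0)"
    unfolding mmult_def using 3 by (intro sum.cong) auto
  also have "\<dots> = tridiag n (Suc m) j"
    using 3 by simp
  finally show ?case
    using 3 by (auto simp: tridiag_def)
qed (auto simp: idm_def)

lemma sum_initial_segment_eq_filter:
  fixes n :: nat
  assumes "q \<in> {1..n}"
  shows "(\<Sum>i=1..n+1-q. f i) = (\<Sum>i\<in>{1..n}. if i + q \<le> n + 1 then f i else 0)"
proof -
  have "{1..n+1-q} = {i\<in>{1..n}. i + q \<le> n + 1}" using assms by auto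
  then show ?thesis by (simp only: sum.inter_filter[OF finite_atLeastAtMost])
qed

lemma mmult_antitriangle_left:
  assumes "q \<in> {1..n}"
  shows "mmult n (antitriangle n) A q p = (\<Sum>i=1..n+1-q. A i p)"
proof -
  have "mmult n (antitriangle n) A q p = (\<Sum>i\<in>{1..n}. if i + q \<le> n + 1 then A i p else 0)"
    unfolding mmult_def antitriangle_def using assms by (intro sum.cong) auto
  then show ?thesis by (simp only: sum_initial_segment_eq_filter[OF assms])
qed

lemma mmult_antitriangle_right:
  assumes "p \<in> {1..n}"
  shows "mmult n A (antitriangle n) q p = (\<Sum>j=1..n+1-p. A q j)"
proof -
  have "mmult n A (antitriangle n) q p = (\<Sum>j\<in>{1..n}. if j + p \<le> n + 1 then A q j else 0)"
    unfolding mmult_def antitriangle_def using assms by (intro sum.cong) auto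
  then show ?thesis by (simp only: sum_initial_segment_eq_filter[OF assms])
qed

lemma F_eq_pairing: "F n X = (\<Sum>i\<in>{1..n}. \<Sum>j\<in>{1..n}. antitriangle n i j * X i j)"
  unfolding F_def
proof (rule sum.cong[OF refl])
  fix i assume "i \<in> {1..n}"
  then show "(\<Sum>j=1..n+1-i. X i j) = (\<Sum>j\<in>{1..n}. antitriangle n i j * X i j)"
    by (simp only: sum_initial_segment_eq_filter) (intro sum.cong; auto simp: antitriangle_def)
qed

lemma sum_reverse_nesting3:
  "(\<Sum>i\<in>A. \<Sum>j\<in>B. \<Sum>k\<in>C. f i j k) = (\<Sum>k\<in>C. \<Sum>j\<in>B. \<Sum>i\<in>A. (f i j k :: 'a :: comm_monoid_add))"
proof -
  have "(\<Sum>i\<in>A. \<Sum>j\<in>B. \<Sum>k\<in>C. f i j k) = (\<Sum>i\<in>A. \<Sum>k\<in>C. \<Sum>j\<in>B. f i j k)"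
    by (rule sum.cong[OF refl]) (rule sum.swap)
  also have "\<dots> = (\<Sum>k\<in>C. \<Sum>i\<in>A. \<Sum>j\<in>B. f i j k)"
    by (rule sum.swap)
  also have "\<dots> = (\<Sum>k\<in>C. \<Sum>j\<in>B. \<Sum>i\<in>A. f i j k)"
    by (rule sum.cong[OF refl]) (rule sum.swap)
  finally show ?thesis .
qed

lemma pairing_lie_bracket:
  assumes sym: "\<And>i j. M i j = M j i"
  shows "(\<Sum>i\<in>{1..n}. \<Sum>j\<in>{1..n}. M i j * lie_bracket n X Y i j)
       = (\<Sum>i\<in>{1..n}. \<Sum>j\<in>{1..n}. (mmult n M X j i - mmult n X M j i) * Y i j)"
proof -
  let ?I = "{1..n}"
  have XY: "(\<Sum>i\<in>?I. \<Sum>j\<in>?I. M i j * mmult n X Y i j) = (\<Sum>i\<in>?I. \<Sum>j\<in>?I. mmult n M X j i * Y i j)"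
  proof -
    have "(\<Sum>i\<in>?I. \<Sum>j\<in>?I. M i j * mmult n X Y i j) = (\<Sum>i\<in>?I. \<Sum>j\<in>?I. \<Sum>k\<in>?I. M i j * X i k * Y k j)"
      by (simp add: mmult_def sum_distrib_left mult.assoc)
    also have "\<dots> = (\<Sum>k\<in>?I. \<Sum>j\<in>?I. \<Sum>i\<in>?I. M j i * X i k * Y k j)"
      by (subst sum_reverse_nesting3) (simp add: sym)
    also have "\<dots> = (\<Sum>i\<in>?I. \<Sum>j\<in>?I. mmult n M X j i * Y i j)"
      by (simp add: mmult_def sum_distrib_right)
    finally show ?thesis .
  qed
  have YX: "(\<Sum>i\<in>?I. \<Sum>j\<in>?I. M i j * mmult n Y X i j) = (\<Sum>i\<in>?I. \<Sum>j\<in>?I. mmult n X M j i * Y i j)"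
  proof -
    have "(\<Sum>i\<in>?I. \<Sum>j\<in>?I. M i j * mmult n Y X i j) = (\<Sum>i\<in>?I. \<Sum>j\<in>?I. \<Sum>k\<in>?I. X k j * M j i * Y i k)"
      by (simp add: mmult_def sum_distrib_left ac_simps) (simp add: sym)
    also have "\<dots> = (\<Sum>i\<in>?I. \<Sum>k\<in>?I. \<Sum>j\<in>?I. X k j * M j i * Y i k)"
      by (rule sum.cong[OF refl]) (rule sum.swap)
    also have "\<dots> = (\<Sum>i\<in>?I. \<Sum>j\<in>?I. mmult n X M j i * Y i j)"
      by (simp add: mmult_def sum_distrib_right)
    finally show ?thesis .
  qed
  show ?thesis
    using XY YX unfolding lie_bracket_def by (simp add: right_diff_distrib left_diff_distrib sum_subtractf)
qed

definition blockdiag :: "nat \<Rightarrow> (nat \<Rightarrow> nat \<Rightarrow> complex) \<Rightarrow> nat \<Rightarrow> nat \<Rightarrow> complex" where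
  "blockdiag n A i j =
     (if i \<in> {1..n} \<and> j \<in> {1..n} then A i j
      else if i \<in> {n+1..2*n} \<and> j \<in> {n+1..2*n} then - A (2*n+1-j) (2*n+1-i) else 0)"

lemma blockdiag_in_sp: "blockdiag n A \<in> sp n"
  unfolding sp_def blockdiag_def by auto

lemma mmult_truncate:
  assumes "\<And>k. k \<in> {n+1..2*n} \<Longrightarrow> X i k * Y k j = 0"
  shows "mmult (2*n) X Y i j = mmult n X Y i j"
proof -
  have "{1..2*n} = {1..n} \<union> {n+1..2*n}" by auto
  then have "mmult (2*n) X Y i j = mmult n X Y i j + (\<Sum>k\<in>{n+1..2*n}. X i k * Y k j)"
    unfolding mmult_def by (simp add: sum.union_disjoint)
  then show ?thesis using assms by simp
qed

lemma lie_bracket_blockdiag_upper: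
  assumes "i \<in> {1..n}" "j \<in> {1..n}"
  shows "lie_bracket (2*n) (blockdiag n A) Y i j = lie_bracket n A Y i j"
proof -
  have "mmult (2*n) (blockdiag n A) Y i j = mmult n A Y i j"
    using assms by (subst mmult_truncate) (auto simp: mmult_def blockdiag_def intro: sum.cong)
  moreover have "mmult (2*n) Y (blockdiag n A) i j = mmult n Y A i j"
    using assms by (subst mmult_truncate) (auto simp: mmult_def blockdiag_def intro: sum.cong)
  ultimately show ?thesis by (simp add: lie_bracket_def)
qed

lemma blockdiag_in_kirillov_kernel:
  assumes comm: "\<And>i j. i \<in> {1..n} \<Longrightarrow> j \<in> {1..n} \<Longrightarrow>
                   mmult n (antitriangle n) A i j = mmult n A (antitriangle n) i j"
  shows "blockdiag n A \<in> kirillov_kernel n"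
proof -
  have "F n (lie_bracket (2*n) (blockdiag n A) Y) = 0" for Y
  proof -
    have "F n (lie_bracket (2*n) (blockdiag n A) Y)
        = (\<Sum>i\<in>{1..n}. \<Sum>j\<in>{1..n}. antitriangle n i j * lie_bracket n A Y i j)"
      unfolding F_eq_pairing by (intro sum.cong refl) (simp add: lie_bracket_blockdiag_upper)
    also have "\<dots> = 0"
      unfolding pairing_lie_bracket[OF antitriangle_sym] by (auto simp: comm intro!: sum.neutral)
    finally show ?thesis .
  qed
  then show ?thesis
    by (simp add: kirillov_kernel_def blockdiag_in_sp)
qed

definition matrix_unit :: "nat \<Rightarrow> nat \<Rightarrow> nat \<Rightarrow> nat \<Rightarrow> complex" where
  "matrix_unit p q i j = (if i = p \<and> j = q then 1 else 0)"

definition sp_sign :: "nat \<Rightarrow> nat \<Rightarrow> nat \<Rightarrow> complex" where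
  "sp_sign n i j = (if (i \<le> n) = (j \<le> n) then -1 else 1)"

lemma reflect_eq_iff:
  fixes n :: nat
  assumes "a \<in> {1..2*n}" "b \<in> {1..2*n}"
  shows "(2*n+1-a = b) \<longleftrightarrow> (a = 2*n+1-b)"
  using assms by auto

lemma sp_sign_reflect:
  assumes "p \<in> {1..2*n}" "q \<in> {1..2*n}"
  shows "sp_sign n (2*n+1-q) (2*n+1-p) = sp_sign n p q"
  using assms by (auto simp: sp_sign_def)

lemma sp_sign_square: "sp_sign n p q * sp_sign n p q = 1"
  by (simp add: sp_sign_def)

lemma matrix_unit_sym_in_sp:
  assumes pq: "p \<in> {1..2*n}" "q \<in> {1..2*n}"
  shows "matrix_unit p q + mscale (sp_sign n p q) (matrix_unit (2*n+1-q) (2*n+1-p)) \<in> sp n"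
    (is "?Y \<in> sp n")
proof -
  let ?p' = "2*n+1-p" and ?q' = "2*n+1-q" and ?s = "sp_sign n p q"
  have pq': "?p' \<in> {1..2*n}" "?q' \<in> {1..2*n}" using pq by auto
  have Y: "?Y i j = (if i = p \<and> j = q then 1 else 0) + ?s * (if i = ?q' \<and> j = ?p' then 1 else 0)" for i j
    by (simp add: matrix_unit_def)
  have "?Y i j = 0" if "\<not> (i \<in> {1..2*n} \<and> j \<in> {1..2*n})" for i j
  proof -
    have "\<not> (i = p \<and> j = q)" "\<not> (i = ?q' \<and> j = ?p')" using that pq pq' by blast+
    then show ?thesis unfolding Y by (simp only: if_False if_not_P) simp
  qed
  moreover have "?Y i j = sp_sign n i j * ?Y (2*n+1-j) (2*n+1-i)"
    if ij: "i \<in> {1..2*n}" "j \<in> {1..2*n}" for i j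
  proof -
    define A where "A = (if i = p \<and> j = q then 1 else 0 :: complex)"
    define B where "B = (if i = ?q' \<and> j = ?p' then 1 else 0 :: complex)"
    have "(2*n+1-j = p \<and> 2*n+1-i = q) \<longleftrightarrow> (i = ?q' \<and> j = ?p')"
      "(2*n+1-j = ?q' \<and> 2*n+1-i = ?p') \<longleftrightarrow> (i = p \<and> j = q)"
      using reflect_eq_iff ij pq pq' by metis+
    then have l: "?Y i j = A + ?s * B" and r: "?Y (2*n+1-j) (2*n+1-i) = B + ?s * A"
      unfolding Y A_def B_def by (simp only: ac_simps)+
    show ?thesis
    proof (cases "A = 0 \<and> B = 0")
      case True
      then show ?thesis unfolding l r by simp
    next
      case False
      then have "sp_sign n i j = ?s"
        using sp_sign_reflect[OF pq] unfolding A_def B_def by (auto split: if_splits)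
      then show ?thesis unfolding l r by (simp add: algebra_simps sp_sign_square)
    qed
  qed
  ultimately show ?thesis
    unfolding sp_def sp_sign_def by blast
qed

lemma antitriangle_eq_0_row: "i \<notin> {1..n} \<Longrightarrow> antitriangle n i j = 0"
  and antitriangle_eq_0_col: "j \<notin> {1..n} \<Longrightarrow> antitriangle n i j = 0"
  by (auto simp: antitriangle_def)

lemma mmult_matrix_unit_right:
  "p \<in> {1..m} \<Longrightarrow> mmult m X (matrix_unit p q) i j = (if j = q then X i p else 0)"
  unfolding mmult_def matrix_unit_def by (simp add: if_distrib[of "\<lambda>c. _ * c"] cong: if_cong)

lemma mmult_matrix_unit_left:
  "q \<in> {1..m} \<Longrightarrow> mmult m (matrix_unit p q) X i j = (if i = p then X q j else 0)"
  unfolding mmult_def matrix_unit_def by (simp add: if_distrib[of "\<lambda>c. c * _"] cong: if_cong)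

lemma F_lie_bracket_matrix_unit:
  assumes "p \<in> {1..2*n}" "q \<in> {1..2*n}"
  shows "F n (lie_bracket (2*n) x (matrix_unit p q)) = lie_bracket n (antitriangle n) x q p"
proof -
  let ?P = "antitriangle n" and ?I = "{1..n}"
  have "F n (lie_bracket (2*n) x (matrix_unit p q))
      = (\<Sum>i\<in>?I. \<Sum>j\<in>?I. ?P i j * ((if j = q then x i p else 0) - (if i = p then x q j else 0)))"
    using assms unfolding F_eq_pairing lie_bracket_def
    by (simp add: mmult_matrix_unit_right mmult_matrix_unit_left)
  also have "\<dots> = (\<Sum>i\<in>?I. \<Sum>j\<in>?I. if j = q then ?P i q * x i p else 0)
                  - (\<Sum>i\<in>?I. if i = p then \<Sum>j\<in>?I. ?P p j * x q j else 0)"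
  proof -
    have "(\<Sum>j\<in>?I. ?P i j * ((if j = q then x i p else 0) - (if i = p then x q j else 0)))
        = (\<Sum>j\<in>?I. if j = q then ?P i q * x i p else 0) - (if i = p then \<Sum>j\<in>?I. ?P p j * x q j else 0)"
      for i by (cases "i = p") (simp_all add: right_diff_distrib sum_subtractf if_distrib[of "\<lambda>c. _ * c"] cong: if_cong)
    then show ?thesis by (simp add: sum_subtractf)
  qed
  also have "\<dots> = (\<Sum>i\<in>?I. ?P i q * x i p) - (\<Sum>j\<in>?I. ?P p j * x q j)"
  proof -
    have "(\<Sum>j\<in>?I. if j = q then ?P i q * x i p else 0) = ?P i q * x i p" for i
      by (cases "q \<in> ?I") (auto simp: antitriangle_eq_0_row antitriangle_eq_0_col)
    moreover have "(\<Sum>i\<in>?I. if i = p then \<Sum>j\<in>?I. ?P p j * x q j else 0) = (\<Sum>j\<in>?I. ?P p j * x q j)"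
      by (cases "p \<in> ?I") (auto simp: antitriangle_eq_0_row antitriangle_eq_0_col)
    ultimately show ?thesis by simp
  qed
  also have "\<dots> = lie_bracket n ?P x q p"
    unfolding lie_bracket_def mmult_def by (simp add: antitriangle_sym[of n _ q] antitriangle_sym[of n p] mult.commute)
  finally show ?thesis .
qed

lemma kirillov_kernel_reflect:
  assumes x: "x \<in> kirillov_kernel n" and pq: "p \<in> {1..2*n}" "q \<in> {1..2*n}"
  shows "lie_bracket n (antitriangle n) x q p
         + sp_sign n p q * lie_bracket n (antitriangle n) x (2*n+1-p) (2*n+1-q) = 0"
proof -
  have "2*n+1-q \<in> {1..2*n}" "2*n+1-p \<in> {1..2*n}" using pq by auto
  moreover have "F n (lie_bracket (2*n) x
      (matrix_unit p q + mscale (sp_sign n p q) (matrix_unit (2*n+1-q) (2*n+1-p)))) = 0"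
    using x matrix_unit_sym_in_sp[OF pq] unfolding kirillov_kernel_def by blast
  ultimately show ?thesis
    using pq by (simp add: lie_bracket_add_right lie_bracket_mscale_right F_add F_mscale F_lie_bracket_matrix_unit)
qed

lemma mmult_antitriangle_left_eq_0: "q \<notin> {1..n} \<Longrightarrow> mmult n (antitriangle n) A q p = 0"
  by (simp add: mmult_def antitriangle_eq_0_row)

lemma mmult_antitriangle_right_eq_0: "p \<notin> {1..n} \<Longrightarrow> mmult n A (antitriangle n) q p = 0"
  by (simp add: mmult_def antitriangle_eq_0_col)

lemma kirillov_kernel_commutes_antitriangle:
  assumes x: "x \<in> kirillov_kernel n" and pq: "p \<in> {1..n}" "q \<in> {1..n}"
  shows "mmult n (antitriangle n) x q p = mmult n x (antitriangle n) q p"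
proof -
  have "2*n+1-p \<notin> {1..n}" "2*n+1-q \<notin> {1..n}" using pq by auto
  then show ?thesis
    using kirillov_kernel_reflect[OF x, of p q] pq
    by (simp add: lie_bracket_def mmult_antitriangle_left_eq_0 mmult_antitriangle_right_eq_0)
qed

lemma kirillov_kernel_lower_left:
  assumes x: "x \<in> kirillov_kernel n" and uv: "u \<in> {1..n}" "v \<in> {1..n}"
  shows "(\<Sum>j=1..v. x (n+u) j) + (\<Sum>j=1..u. x (n+v) j) = 0"
proof -
  have m: "n+1-v \<in> {1..n}" "n+1-u \<in> {1..n}" "n+u \<notin> {1..n}" "n+v \<notin> {1..n}" using uv by auto
  have "2*n+1-(n+1-v) = n+v" "2*n+1-(n+u) = n+1-u" "sp_sign n (n+1-v) (n+u) = 1"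
    "n+1-(n+1-v) = v" "n+1-(n+1-u) = u" "n+1-v \<in> {1..2*n}" "n+u \<in> {1..2*n}"
    using uv by (auto simp: sp_sign_def)
  then show ?thesis
    using kirillov_kernel_reflect[OF x, of "n+1-v" "n+u"]
      mmult_antitriangle_right[OF m(1), of x "n+u"] mmult_antitriangle_right[OF m(2), of x "n+v"]
      mmult_antitriangle_left_eq_0[OF m(3)] mmult_antitriangle_left_eq_0[OF m(4)]
    by (simp add: lie_bracket_def neg_eq_iff_add_eq_0)
qed

lemma kirillov_kernel_upper_right:
  assumes x: "x \<in> kirillov_kernel n" and uv: "u \<in> {1..n}" "v \<in> {1..n}"
  shows "(\<Sum>i=1..v. x i (n+u)) + (\<Sum>i=1..u. x i (n+v)) = 0"
proof -
  have m: "n+1-v \<in> {1..n}" "n+1-u \<in> {1..n}" "n+u \<notin> {1..n}" "n+v \<notin> {1..n}" using uv by auto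
  have "2*n+1-(n+1-v) = n+v" "2*n+1-(n+u) = n+1-u" "sp_sign n (n+u) (n+1-v) = 1"
    "n+1-(n+1-v) = v" "n+1-(n+1-u) = u" "n+1-v \<in> {1..2*n}" "n+u \<in> {1..2*n}"
    using uv by (auto simp: sp_sign_def)
  then show ?thesis
    using kirillov_kernel_reflect[OF x, of "n+u" "n+1-v"]
      mmult_antitriangle_left[OF m(1), of x "n+u"] mmult_antitriangle_left[OF m(2), of x "n+v"]
      mmult_antitriangle_right_eq_0[OF m(3)] mmult_antitriangle_right_eq_0[OF m(4)]
    by (simp add: lie_bracket_def neg_eq_iff_add_eq_0)
qed

lemma sum_atLeast1_diff1: "1 \<le> (j::nat) \<Longrightarrow> (\<Sum>i=1..j. g i) - (\<Sum>i=1..j-1. g i) = (g j :: 'a::ab_group_add)"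
  by (cases j) (auto simp: sum.cl_ivl_Suc)

lemma prefix_sums_zero_imp_zero:
  fixes r :: "nat \<Rightarrow> 'a::ab_group_add"
  assumes "\<And>l. l \<in> {1..n} \<Longrightarrow> (\<Sum>j=1..l. r j) = 0" and "j \<in> {1..n}"
  shows "r j = 0"
proof -
  have "(\<Sum>i=1..j-1. r i) = 0"
  proof (cases "j = 1")
    case False
    then have "j - 1 \<in> {1..n}" using assms(2) by auto
    then show ?thesis using assms(1) by blast
  qed simp
  then show ?thesis using sum_atLeast1_diff1[of j r] assms by simp
qed

lemma antitriangle_commutant_next_row:
  fixes a :: "nat \<Rightarrow> nat \<Rightarrow> complex"
  assumes comm: "\<And>p q. p \<in> {1..n} \<Longrightarrow> q \<in> {1..n} \<Longrightarrow> (\<Sum>i=1..n+1-q. a i p) = (\<Sum>j=1..n+1-p. a q j)"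
    and k: "1 \<le> k" "k < n"
    and rows: "\<And>r j. r \<in> {1..k} \<Longrightarrow> j \<in> {1..n} \<Longrightarrow> a r j = 0"
    and j: "j \<in> {1..n}"
  shows "a (k+1) j = 0"
proof -
  have mirror_row: "a (n+1-k) j = 0" if "j \<in> {1..n}" for j
  proof (rule prefix_sums_zero_imp_zero[OF _ that])
    fix l assume l: "l \<in> {1..n}"
    have m: "n+1-l \<in> {1..n}" "n+1-k \<in> {1..n}" and e: "n+1-(n+1-l) = l" "n+1-(n+1-k) = k"
      using l k by auto
    have "(\<Sum>j=1..l. a (n+1-k) j) = (\<Sum>i=1..k. a i (n+1-l))"
      using comm[OF m] e by simp
    also have "\<dots> = 0" using rows m(1) by simp
    finally show "(\<Sum>j=1..l. a (n+1-k) j) = 0" .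
  qed
  show ?thesis
  proof (rule prefix_sums_zero_imp_zero[OF _ j])
    fix l assume l: "l \<in> {1..n}"
    have m: "n+1-l \<in> {1..n}" "k+1 \<in> {1..n}" "k \<in> {1..n}" and e: "n+1-(n+1-l) = l"
      using l k by auto
    have "(\<Sum>j=1..l. a (k+1) j) = (\<Sum>i=1..n-k. a i (n+1-l))"
      using comm[OF m(1,2)] e by simp
    also have "\<dots> = (\<Sum>i=1..n+1-k. a i (n+1-l))"
      using mirror_row[OF m(1)] k by (simp add: Suc_diff_le sum.cl_ivl_Suc)
    also have "\<dots> = (\<Sum>j=1..l. a k j)"
      using comm[OF m(1,3)] e by simp
    also have "\<dots> = 0" using rows l k by simp
    finally show "(\<Sum>j=1..l. a (k+1) j) = 0" .
  qed
qed

lemma antitriangle_commutant_eq_0: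
  fixes a :: "nat \<Rightarrow> nat \<Rightarrow> complex"
  assumes comm: "\<And>p q. p \<in> {1..n} \<Longrightarrow> q \<in> {1..n} \<Longrightarrow>
                   mmult n (antitriangle n) a q p = mmult n a (antitriangle n) q p"
    and row1: "\<And>j. j \<in> {1..n} \<Longrightarrow> a 1 j = 0"
    and ij: "i \<in> {1..n}" "j \<in> {1..n}"
  shows "a i j = 0"
proof -
  have prefix: "(\<Sum>i=1..n+1-q. a i p) = (\<Sum>j=1..n+1-p. a q j)" if "p \<in> {1..n}" "q \<in> {1..n}" for p q
    using comm[OF that] by (simp add: mmult_antitriangle_left[OF that(2)] mmult_antitriangle_right[OF that(1)])
  have "\<forall>r\<in>{1..k}. \<forall>j\<in>{1..n}. a r j = 0" if "k \<in> {1..n}" for k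
    using that
  proof (induction k)
    case (Suc k)
    then show ?case
      using row1 antitriangle_commutant_next_row[OF prefix, of k] by (cases "k = 0") (auto simp: le_Suc_eq)
  qed simp
  then show ?thesis using ij by auto
qed

text \<open>The table R below is a table of prefix sums of an off-diagonal block; the reflection
  identity encodes the symmetry of the block across the antidiagonal.\<close>

context
  fixes n :: nat and R :: "nat \<Rightarrow> nat \<Rightarrow> complex"
  assumes anti: "\<And>u v. u \<in> {1..n} \<Longrightarrow> v \<in> {1..n} \<Longrightarrow> R u v = - R v u"
    and R_0: "\<And>u. R u 0 = 0"
    and reflect: "\<And>u j. u \<in> {1..n} \<Longrightarrow> j \<in> {1..n} \<Longrightarrow>
                   R u j - R u (j-1) = R (n+1-j) (n+1-u) - R (n+1-j) (n-u)"
begin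

definition antidiagonals_vanish :: "nat \<Rightarrow> bool" where
  "antidiagonals_vanish s \<longleftrightarrow> (\<forall>u\<in>{1..n}. \<forall>v\<in>{1..n}. u + v = s \<or> u + v = 2*n+1-s \<longrightarrow> R u v = 0)"

lemma antidiagonals_vanish_1: "antidiagonals_vanish 1"
  unfolding antidiagonals_vanish_def
proof (intro ballI impI)
  fix u v assume uv: "u \<in> {1..n}" "v \<in> {1..n}" "u + v = 1 \<or> u + v = 2*n+1-1"
  then have "u = n" "v = n" by auto
  then show "R u v = 0" using anti[of n n] uv by simp
qed

context
  fixes s :: nat
  assumes s: "2 \<le> s" "s \<le> n" and prev: "antidiagonals_vanish (s-1)"
begin

lemma antidiagonals_vanish_prev:
  "u \<in> {1..n} \<Longrightarrow> v \<in> {1..n} \<Longrightarrow> u + v = s - 1 \<or> u + v = 2*n+2-s \<Longrightarrow> R u v = 0"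
  using prev s unfolding antidiagonals_vanish_def by auto

lemma lower_antidiagonal_reflect:
  assumes "1 \<le> u" "1 \<le> j" "u + j = s"
  shows "R u j = - R (n+1-j) (n-u)"
proof -
  have "R u (j-1) = 0"
  proof (cases "j = 1")
    case False
    then have "u \<in> {1..n}" "j - 1 \<in> {1..n}" using assms s by auto
    then show ?thesis using antidiagonals_vanish_prev[of u "j-1"] assms by simp
  qed (simp add: R_0)
  moreover have "n+1-j \<in> {1..n}" "n+1-u \<in> {1..n}" "(n+1-j) + (n+1-u) = 2*n+2-s"
    using assms s by auto
  then have "R (n+1-j) (n+1-u) = 0"
    using antidiagonals_vanish_prev by blast
  ultimately show ?thesis
    using reflect[of u j] assms s by simp
qed

lemma lower_antidiagonal_shift:
  assumes "1 \<le> w" "w + 1 \<le> s - 1"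
  shows "R (w+1) (s-(w+1)) = R w (s-w)"
proof -
  have m: "w+1 \<in> {1..n}" "s-(w+1) \<in> {1..n}" "n-w \<in> {1..n}" "n+1-s+w \<in> {1..n}"
    using assms s by auto
  have "R (w+1) (s-(w+1)) = - R (s-(w+1)) (w+1)"
    using anti[OF m(1,2)] .
  also have "\<dots> = R (n-w) (n+1-s+w)"
    using lower_antidiagonal_reflect[of "s-(w+1)" "w+1"] assms s by (simp add: Suc_diff_Suc)
  also have "\<dots> = - R (n+1-s+w) (n-w)"
    using anti[OF m(3,4)] .
  also have "\<dots> = R w (s-w)"
    using lower_antidiagonal_reflect[of w "s-w"] assms s by simp
  finally show ?thesis .
qed

lemma antidiagonals_vanish_step: "antidiagonals_vanish s"
proof -
  have diag: "R u (s-u) = R 1 (s-1)" if "1 \<le> u" "u \<le> s-1" for u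
    using that
  proof (induction u)
    case (Suc w)
    then show ?case
      using lower_antidiagonal_shift[of w] by (cases "w = 0") auto
  qed simp
  have "s - 1 \<in> {1..n}" "(1::nat) \<in> {1..n}" using s by auto
  then have "R (s-1) 1 = - R 1 (s-1)"
    by (rule anti)
  moreover have "R (s-1) 1 = R 1 (s-1)"
    using diag[of "s-1"] s by simp
  ultimately have corner: "R 1 (s-1) = 0" by simp
  have lower: "R u v = 0" if "u \<in> {1..n}" "v \<in> {1..n}" "u + v = s" for u v
  proof -
    have "1 \<le> u" "u \<le> s - 1" "v = s - u" using that by auto
    then show ?thesis using diag[of u] corner by simp
  qed
  have upper: "R u v = 0" if "u \<in> {1..n}" "v \<in> {1..n}" "u + v = 2*n+1-s" "v < n" for u v
  proof -
    have "n-v \<in> {1..n}" "n+1-u \<in> {1..n}" "(n-v) + (n+1-u) = s" "n+1-(n+1-u) = u" "n-(n-v) = v"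
      using that s by auto
    then show ?thesis
      using lower_antidiagonal_reflect[of "n-v" "n+1-u"] lower[of "n-v" "n+1-u"] by simp
  qed
  show ?thesis
    unfolding antidiagonals_vanish_def
  proof (intro ballI impI)
    fix u v assume uv: "u \<in> {1..n}" "v \<in> {1..n}" "u + v = s \<or> u + v = 2*n+1-s"
    show "R u v = 0"
    proof (cases "u + v = s")
      case False
      then have sum: "u + v = 2*n+1-s" using uv by simp
      show ?thesis
      proof (cases "v < n")
        case False
        then have "u < n" "v = n" using sum uv s by auto
        then show ?thesis
          using upper[of v u] anti[of u v] uv sum by (simp add: add.commute)
      qed (use upper uv sum in auto)
    qed (use lower uv in auto)
  qed
qed

end

lemma antisymmetric_reflecting_eq_0:
  assumes "u \<in> {1..n}" "v \<in> {1..n}"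
  shows "R u v = 0"
proof -
  have levels: "antidiagonals_vanish s" if "s \<in> {1..n}" for s
    using that
  proof (induction s)
    case (Suc s)
    then show ?case
      using antidiagonals_vanish_1 antidiagonals_vanish_step[of "Suc s"] by (cases "s = 0") auto
  qed simp
  show ?thesis
  proof (cases "u + v \<le> n")
    case True
    then show ?thesis using levels[of "u+v"] assms unfolding antidiagonals_vanish_def by auto
  next
    case False
    then have "2*n+1-(u+v) \<in> {1..n}" "u + v = 2*n+1-(2*n+1-(u+v))" using assms by auto
    then show ?thesis using levels[of "2*n+1-(u+v)"] assms unfolding antidiagonals_vanish_def by blast
  qed
qed

end

lemma prefix_sums_antisym_eq_0:
  fixes f :: "nat \<Rightarrow> nat \<Rightarrow> complex"
  assumes anti: "\<And>u v. u \<in> {1..n} \<Longrightarrow> v \<in> {1..n} \<Longrightarrow> (\<Sum>j=1..v. f u j) + (\<Sum>j=1..u. f v j) = 0"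
    and sym: "\<And>u j. u \<in> {1..n} \<Longrightarrow> j \<in> {1..n} \<Longrightarrow> f u j = f (n+1-j) (n+1-u)"
    and uj: "u \<in> {1..n}" "j \<in> {1..n}"
  shows "f u j = 0"
proof -
  define R where "R u v = (\<Sum>j=1..v. f u j)" for u v
  have diff: "R u j - R u (j-1) = f u j" if "1 \<le> j" for u j
    unfolding R_def using sum_atLeast1_diff1[OF that] .
  have R_eq_0: "R u v = 0" if "u \<in> {1..n}" "v \<in> {1..n}" for u v
  proof (rule antisymmetric_reflecting_eq_0[of n R, OF _ _ _ that])
    show "R u v = - R v u" if "u \<in> {1..n}" "v \<in> {1..n}" for u v
      using anti[OF that] unfolding R_def by (simp add: eq_neg_iff_add_eq_0)
    show "R u 0 = 0" for u
      by (simp add: R_def)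
    show "R u j - R u (j-1) = R (n+1-j) (n+1-u) - R (n+1-j) (n-u)"
      if "u \<in> {1..n}" "j \<in> {1..n}" for u j
    proof -
      have "1 \<le> n+1-u" "n+1-u-1 = n-u" using that by auto
      then show ?thesis using diff[of j u] diff[of "n+1-u" "n+1-j"] sym[OF that] that by simp
    qed
  qed
  have "R u (j-1) = 0"
  proof (cases "j = 1")
    case False
    then have "j - 1 \<in> {1..n}" using uj by auto
    then show ?thesis using R_eq_0 uj by blast
  qed (simp add: R_def)
  then show ?thesis
    using diff[of j u] R_eq_0[OF uj] uj by simp
qed

lemma sp_entry:
  "X \<in> sp n \<Longrightarrow> i \<in> {1..2*n} \<Longrightarrow> j \<in> {1..2*n} \<Longrightarrow> X i j = sp_sign n i j * X (2*n+1-j) (2*n+1-i)"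
  unfolding sp_def sp_sign_def by blast

lemma sp_outside: "X \<in> sp n \<Longrightarrow> \<not> (i \<in> {1..2*n} \<and> j \<in> {1..2*n}) \<Longrightarrow> X i j = 0"
  unfolding sp_def by blast

lemma kirillov_kernel_eq_0:
  assumes z: "z \<in> kirillov_kernel n" and row1: "\<And>j. j \<in> {1..n} \<Longrightarrow> z 1 j = 0"
  shows "z = 0"
proof -
  have sp: "z \<in> sp n" using z unfolding kirillov_kernel_def by blast
  have upper_left: "z i j = 0" if "i \<in> {1..n}" "j \<in> {1..n}" for i j
    using antitriangle_commutant_eq_0[OF kirillov_kernel_commutes_antitriangle[OF z] row1 that] .
  have lower_left: "z (n+u) j = 0" if "u \<in> {1..n}" "j \<in> {1..n}" for u j
  proof (rule prefix_sums_antisym_eq_0[of n "\<lambda>u j. z (n+u) j", OF _ _ that])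
    show "(\<Sum>j=1..v. z (n+u) j) + (\<Sum>j=1..u. z (n+v) j) = 0" if "u \<in> {1..n}" "v \<in> {1..n}" for u v
      using kirillov_kernel_lower_left[OF z that] .
    show "z (n+u) j = z (n+(n+1-j)) (n+1-u)" if "u \<in> {1..n}" "j \<in> {1..n}" for u j
    proof -
      have "n+u \<in> {1..2*n}" "j \<in> {1..2*n}" "2*n+1-j = n+(n+1-j)" "2*n+1-(n+u) = n+1-u"
        "sp_sign n (n+u) j = 1"
        using that by (auto simp: sp_sign_def)
      then show ?thesis using sp_entry[OF sp, of "n+u" j] by simp
    qed
  qed
  have upper_right: "z j (n+u) = 0" if "u \<in> {1..n}" "j \<in> {1..n}" for u j
  proof (rule prefix_sums_antisym_eq_0[of n "\<lambda>u j. z j (n+u)", OF _ _ that])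
    show "(\<Sum>i=1..v. z i (n+u)) + (\<Sum>i=1..u. z i (n+v)) = 0" if "u \<in> {1..n}" "v \<in> {1..n}" for u v
      using kirillov_kernel_upper_right[OF z that] .
    show "z j (n+u) = z (n+1-u) (n+(n+1-j))" if "u \<in> {1..n}" "j \<in> {1..n}" for u j
    proof -
      have "j \<in> {1..2*n}" "n+u \<in> {1..2*n}" "2*n+1-j = n+(n+1-j)" "2*n+1-(n+u) = n+1-u"
        "sp_sign n j (n+u) = 1"
        using that by (auto simp: sp_sign_def)
      then show ?thesis using sp_entry[OF sp, of j "n+u"] by simp
    qed
  qed
  have "z i j = 0" if i: "i \<in> {1..2*n}" and j: "j \<in> {1..2*n}" for i j
  proof (cases "i \<le> n"; cases "j \<le> n")
    assume "i \<le> n" "j \<le> n"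
    then show ?thesis using upper_left i j by simp
  next
    assume "i \<le> n" "\<not> j \<le> n"
    then have "j - n \<in> {1..n}" "i \<in> {1..n}" using i j by auto
    then show ?thesis using upper_right[of "j-n" i] \<open>\<not> j \<le> n\<close> by simp
  next
    assume "\<not> i \<le> n" "j \<le> n"
    then have "i - n \<in> {1..n}" "j \<in> {1..n}" using i j by auto
    then show ?thesis using lower_left[of "i-n" j] \<open>\<not> i \<le> n\<close> by simp
  next
    assume "\<not> i \<le> n" "\<not> j \<le> n"
    then have "2*n+1-j \<in> {1..n}" "2*n+1-i \<in> {1..n}" using i j by auto
    then show ?thesis using sp_entry[OF sp i j] upper_left[of "2*n+1-j" "2*n+1-i"] i j by simp
  qed
  then show ?thesis using sp_outside[OF sp] by (auto simp: fun_eq_iff)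
qed

lemma cheb_block_in_kirillov_kernel: "blockdiag n (cheb n m) \<in> kirillov_kernel n"
  by (rule blockdiag_in_kirillov_kernel) (simp add: antitriangle_cheb_commute)

lemma cheb_block_row1:
  assumes "m \<in> {1..n}" "j \<in> {1..n}"
  shows "blockdiag n (cheb n m) 1 j = (if m = j then 1 else 0)"
  using assms cheb_row1[of n m j] by (auto simp: blockdiag_def)

theorem theorem4p9:
  fixes n :: nat
  assumes "n \<ge> 1"
  shows "vector_space.dim mscale (kirillov_kernel n) = n"
proof -
  have "mat.dim (kirillov_kernel n) = card {1..n}"
  proof (rule mat.dim_eq_card_of_coordinates[where b = "\<lambda>m. blockdiag n (cheb n m)" and c = "\<lambda>j x. x 1 j"])
    show "mat.subspace (kirillov_kernel n)" by (rule subspace_kirillov_kernel)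
    show "(\<lambda>m. blockdiag n (cheb n m)) ` {1..n} \<subseteq> kirillov_kernel n"
      using cheb_block_in_kirillov_kernel by blast
    show "blockdiag n (cheb n i) 1 j = (if i = j then 1 else 0)" if "i \<in> {1..n}" "j \<in> {1..n}" for i j
      by (rule cheb_block_row1[OF that])
    show "x = 0" if "x \<in> kirillov_kernel n" "\<And>j. j \<in> {1..n} \<Longrightarrow> x 1 j = 0" for x
      using kirillov_kernel_eq_0 that by blast
  qed simp_all
  then show ?thesis by simp
qed

end
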